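(* If $t\in[1/2,1]$, then $w_1(t,a)<w_3(t,a)$ and $w(t,a)/W(t,a)\le 24/35$ for all $a\in[(3t+2)/4,2]$.
   Context: For $(t,a)\in\mathbb R^2$ define $w_1(t,a)=(2t+3)a-(3t^2/4+t)$, $w_2(t,a)=(4t+4)a-(3t^2/2+2t+2)$, $w_3(t,a)=8ta-(3t^2+4t-4)$, $W(t,a)=[(t+2)a-(t^2/2+t)](t+2)$, and $w(t,a)=\min\{w_1(t,a),w_2(t,a),w_3(t,a)\}$. *)

theory Defs
  imports Complex_Main
begin

definition w1 :: "real \<Rightarrow> real \<Rightarrow> real" where
  "w1 t a = (2*t+3)*a - (3*t^2/4 + t)"

definition w2 :: "real \<Rightarrow> real \<Rightarrow> real" where
  "w2 t a = (4*t+4)*a - (3*t^2/2 + 2*t + 2)"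

definition w3 :: "real \<Rightarrow> real \<Rightarrow> real" where
  "w3 t a = 8*t*a - (3*t^2 + 4*t - 4)"

definition WW :: "real \<Rightarrow> real \<Rightarrow> real" where
  "WW t a = ((t+2)*a - (t^2/2 + t)) * (t+2)"

definition w :: "real \<Rightarrow> real \<Rightarrow> real" where
  "w t a = min (w1 t a) (min (w2 t a) (w3 t a))"

end

theory Submission
  imports Defs
begin

text \<open>
  Both \<open>24 W - 35 w\<^sub>1\<close> and \<open>24 W - 35 w\<^sub>2\<close> are affine in \<open>a\<close>, the first increasing and the
  second decreasing, so the bound \<open>35 min(w\<^sub>1, w\<^sub>2) \<le> 24 W\<close> (for every \<open>a\<close>) only has to be checked
  at the crossing point \<open>w\<^sub>1 = w\<^sub>2\<close>; there it reduces to the nonnegativity of a quartic in \<open>t\<close> on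
  \<open>[1/2, 1]\<close>. The lower bound on \<open>a\<close> is needed only for \<open>w\<^sub>1 < w\<^sub>3\<close> and for \<open>W > 0\<close>.
\<close>

text \<open>The common value of \<open>(2t+1)(24 W - 35 w\<^sub>i)\<close> at the crossing point \<open>w\<^sub>1 = w\<^sub>2\<close>.\<close>
definition crossing_gap :: "real \<Rightarrow> real" where
  "crossing_gap t = -18 + 30*t + 39/2*t^2 - 12*t^3 - 6*t^4"

lemma crossing_gap_nonneg:
  assumes "1/2 \<le> t" "t \<le> 1"
  shows "crossing_gap t \<ge> 0"
proof -
  have factor: "crossing_gap t = (t - 1/2) * (36 + 12*t - 15*t^2 - 6*t^3)"
    unfolding crossing_gap_def
    by (simp add: algebra_simps power2_eq_square power3_eq_cube power4_eq_xxxx)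
  have "t^2 \<le> 1" "t^3 \<le> 1"
    using assms by (simp_all add: power_le_one)
  then have "36 + 12*t - 15*t^2 - 6*t^3 \<ge> 0"
    using assms by linarith
  with assms show ?thesis
    unfolding factor by simp
qed

lemma scaled_gap_w1:
  "(2*t+1) * (24 * WW t a - 35 * w1 t a)
     = (24*t^2 + 26*t - 9) * (w2 t a - w1 t a) + crossing_gap t"
  unfolding w1_def w2_def WW_def crossing_gap_def
  by (simp add: field_simps power2_eq_square power3_eq_cube power4_eq_xxxx)

lemma scaled_gap_w2:
  "(2*t+1) * (24 * WW t a - 35 * w2 t a)
     = (24*t^2 - 44*t - 44) * (w2 t a - w1 t a) + crossing_gap t"
  unfolding w1_def w2_def WW_def crossing_gap_def
  by (simp add: field_simps power2_eq_square power3_eq_cube power4_eq_xxxx)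

lemma min_w1_w2_le_WW:
  assumes "1/2 \<le> t" "t \<le> 1"
  shows "35 * min (w1 t a) (w2 t a) \<le> 24 * WW t a"
proof -
  have "t^2 \<le> 1"
    using assms by (simp add: power_le_one)
  moreover have "t^2 \<ge> 0"
    by simp
  ultimately have slope_w1: "24*t^2 + 26*t - 9 > 0" and slope_w2: "24*t^2 - 44*t - 44 < 0"
    using assms by linarith+
  have gap: "crossing_gap t \<ge> 0"
    using crossing_gap_nonneg[OF assms] .
  have "(2*t+1) * (24 * WW t a - 35 * min (w1 t a) (w2 t a)) \<ge> 0"
  proof (cases "w1 t a \<le> w2 t a")
    case True
    then have "(24*t^2 + 26*t - 9) * (w2 t a - w1 t a) \<ge> 0"
      using slope_w1 by simp
    with True gap show ?thesis
      using scaled_gap_w1[of t a] by simp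
  next
    case False
    then have "(24*t^2 - 44*t - 44) * (w2 t a - w1 t a) \<ge> 0"
      using slope_w2 by (simp add: mult_nonpos_nonpos)
    with False gap show ?thesis
      using scaled_gap_w2[of t a] by simp
  qed
  moreover have "2*t + 1 > 0"
    using assms by simp
  ultimately show ?thesis
    by (simp add: zero_le_mult_iff)
qed

lemma w1_less_w3:
  assumes "1/2 \<le> t" "(3*t+2)/4 \<le> a"
  shows "w1 t a < w3 t a"
proof -
  have "(6*t-3) * a \<ge> (6*t-3) * ((3*t+2)/4)"
    using assms mult_left_mono[of "(3*t+2)/4" a "6*t-3"] by simp
  moreover have "(6*t-3) * ((3*t+2)/4) - (9*t^2/4 + 3*t - 4) = 9/4 * (t - 1/2)^2 + 31/16"
    by (simp add: field_simps power2_eq_square)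
  moreover have "w3 t a - w1 t a = (6*t-3) * a - (9*t^2/4 + 3*t - 4)"
    unfolding w1_def w3_def by (simp add: algebra_simps)
  moreover have "(t - 1/2)^2 \<ge> 0"
    by simp
  ultimately show ?thesis
    by linarith
qed

lemma WW_pos:
  assumes "-2 < t" "(3*t+2)/4 \<le> a"
  shows "WW t a > 0"
proof -
  have "(t+2) * a \<ge> (t+2) * ((3*t+2)/4)"
    using assms by (simp add: mult_left_mono)
  moreover have "(t+2) * ((3*t+2)/4) - (t^2/2 + t) = (t+2)^2 / 4"
    by (simp add: algebra_simps power2_eq_square)
  moreover have "(t+2)^2 > 0"
    using assms by simp
  ultimately have "(t+2) * a - (t^2/2 + t) > 0"
    by linarith
  with assms show ?thesis
    unfolding WW_def by simp
qed

theorem lemmaA7: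
  fixes t :: real
  assumes "t \<in> {1/2..1}"
  shows "\<forall>a\<in>{(3*t+2)/4..2}. w1 t a < w3 t a \<and> w t a / WW t a \<le> 24/35"
proof
  fix a
  assume "a \<in> {(3*t+2)/4..2}"
  then have a: "(3*t+2)/4 \<le> a"
    by simp
  have t: "1/2 \<le> t" "t \<le> 1"
    using assms by simp_all
  have "35 * w t a \<le> 24 * WW t a"
    using min_w1_w2_le_WW[OF t, of a] unfolding w_def by linarith
  moreover have "WW t a > 0"
    using WW_pos a t by simp
  ultimately have "w t a / WW t a \<le> 24/35"
    by (simp add: divide_simps)
  with w1_less_w3[OF t(1) a] show "w1 t a < w3 t a \<and> w t a / WW t a \<le> 24/35"
    by simp
qed

end
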